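(* Let $\Gamma\le\mathrm{Iso}(\mathbb{R}^{r,s})$ be a subgroup whose centralizer in $\mathrm{Iso}(\mathbb{R}^{r,s})$ has an open orbit in $\mathbb{R}^{r,s}$, let $U_0=U_\Gamma\cap U_\Gamma^\perp$, $k=\dim U_0$, $n=r+s$, and fix a Witt basis with respect to $U_0$. Then for every $\gamma=(I+A,v)\in\Gamma$ the matrix of $A$ in this basis has the block form $$A=\begin{pmatrix}0&-B^\top\tilde I&C\\0&0&B\\0&0&0\end{pmatrix}$$ with $B\in\mathbb{R}^{(n-2k)\times k}$ and $C\in\mathbb{R}^{k\times k}$ skew-symmetric. Moreover $B^\top\tilde I B=0$, i.e. the columns of $B$ are isotropic and mutually orthogonal with respect to $\tilde I$.
   Context: $\mathbb{R}^{r,s}$ denotes $\mathbb{R}^{n}$, $n=r+s$, with a nondegenerate symmetric bilinear form $\langle\cdot,\cdot\rangle$ of signature $(r,s)$; $\mathrm{Iso}(\mathbb{R}^{r,s})$ is its group of affine isometries, whose elements are written $\gamma=(I+A,v)\colon x\mapsto(I+A)x+v$. $U_\Gamma=\sum_{(I+A,v)\in\Gamma}\operatorname{im}A$, and $U_0=U_\Gamma\cap U_\Gamma^\perp$ is totally isotropic. A Witt basis with respect to $U_0$ ($k=\dim U_0$) is a basis $u_1,\dots,u_k,w_1,\dots,w_{n-2k},u_1^*,\dots,u_k^*$ of $\mathbb{R}^{r,s}$ such that $u_1,\dots,u_k$ is a basis of $U_0$, $w_1,\dots,w_{n-2k}$ is a basis of a nondegenerate subspace $W$ with $U_0^\perp=U_0\oplus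 W$, and $u_1^*,\dots,u_k^*$ span a totally isotropic subspace $U_0^*$ orthogonal to $W$ with $\langle u_i,u_j^*\rangle=\delta_{ij}$. $\tilde I$ is the (diagonal signature) matrix of the restriction of $\langle\cdot,\cdot\rangle$ to $W$ in the basis $w_1,\dots,w_{n-2k}$. Known facts (Wolf) for such $\Gamma$: every $(I+A,v)\in\Gamma$ satisfies $A^2=0$, $Av=0$, $\langle Ax,y\rangle=-\langle x,Ay\rangle$, $\ker A=(\operatorname{im}A)^\perp$; for $\gamma_i=(I+A_i,v_i)\in\Gamma$ one has $A_1A_2A_3=0$ and $[\gamma_1,\gamma_2]=(I+2A_1A_2,2A_1v_2)$. *)

theory Defs
  imports "HOL-Analysis.Analysis"
begin

text \<open>R^{r,s}: the space real^'n with the diagonal form of signature given by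
  eps (eps i \<in> {1,-1}; r = number of +1's, s = number of -1's).\<close>

definition sig :: "('n::finite \<Rightarrow> real) \<Rightarrow> bool" where
  "sig eps \<longleftrightarrow> (\<forall>i. eps i = 1 \<or> eps i = -1)"

definition bf :: "('n::finite \<Rightarrow> real) \<Rightarrow> real^'n \<Rightarrow> real^'n \<Rightarrow> real" where
  "bf eps x y = (\<Sum>i\<in>UNIV. eps i * (x$i) * (y$i))"

definition Iso :: "('n::finite \<Rightarrow> real) \<Rightarrow> (real^'n \<Rightarrow> real^'n) set" where
  "Iso eps = {f. \<exists>L v. linear L \<and> (\<forall>x y. bf eps (L x) (L y) = bf eps x y)
                    \<and> f = (\<lambda>x. L x + v)}"

definition is_subgroup :: "('n::finite \<Rightarrow> real) \<Rightarrow> (real^'n \<Rightarrow> real^'n) set \<Rightarrow> bool" where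
  "is_subgroup eps G \<longleftrightarrow> G \<subseteq> Iso eps \<and> id \<in> G \<and> (\<forall>f\<in>G. \<forall>g\<in>G. f \<circ> g \<in> G)
      \<and> (\<forall>f\<in>G. inv f \<in> G)"

definition centralizer :: "('n::finite \<Rightarrow> real) \<Rightarrow> (real^'n \<Rightarrow> real^'n) set \<Rightarrow> (real^'n \<Rightarrow> real^'n) set" where
  "centralizer eps G = {g\<in>Iso eps. \<forall>f\<in>G. g \<circ> f = f \<circ> g}"

definition has_open_orbit :: "(real^'n::finite \<Rightarrow> real^'n) set \<Rightarrow> bool" where
  "has_open_orbit H \<longleftrightarrow> (\<exists>x. open ((\<lambda>g. g x) ` H))"

text \<open>For \<gamma> = (I+A, v): A x = \<gamma> x - \<gamma> 0 - x.\<close>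
definition Apart :: "(real^'n::finite \<Rightarrow> real^'n) \<Rightarrow> real^'n \<Rightarrow> real^'n" where
  "Apart f x = f x - f 0 - x"

definition U_Gamma :: "(real^'n::finite \<Rightarrow> real^'n) set \<Rightarrow> (real^'n) set" where
  "U_Gamma G = span (\<Union>f\<in>G. range (Apart f))"

definition orth :: "('n::finite \<Rightarrow> real) \<Rightarrow> (real^'n) set \<Rightarrow> (real^'n) set" where
  "orth eps S = {x. \<forall>y\<in>S. bf eps x y = 0}"

definition U0 :: "('n::finite \<Rightarrow> real) \<Rightarrow> (real^'n \<Rightarrow> real^'n) set \<Rightarrow> (real^'n) set" where
  "U0 eps G = U_Gamma G \<inter> orth eps (U_Gamma G)"

text \<open>Witt basis u_0..u_{k-1}, w_0..w_{m-1}, us_0..us_{k-1} w.r.t. U (k = dim U, m = n - 2k),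
  with w orthonormal (so that the Gram matrix of w is a diagonal signature matrix).\<close>
definition witt_basis :: "('n::finite \<Rightarrow> real) \<Rightarrow> (real^'n) set \<Rightarrow> (nat \<Rightarrow> real^'n)
    \<Rightarrow> (nat \<Rightarrow> real^'n) \<Rightarrow> (nat \<Rightarrow> real^'n) \<Rightarrow> bool" where
  "witt_basis eps U u w us \<longleftrightarrow>
    (let k = dim U; m = CARD('n) - 2 * k;
         L = map u [0..<k] @ map w [0..<m] @ map us [0..<k];
         W = span (w ` {..<m})
     in distinct L \<and> independent (set L) \<and> span (set L) = UNIV
      \<and> span (u ` {..<k}) = U
      \<and> orth eps U = {a + b | a b. a \<in> U \<and> b \<in> W} \<and> U \<inter> W = {0}
      \<and> (\<forall>x\<in>W. (\<forall>y\<in>W. bf eps x y = 0) \<longrightarrow> x = 0)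
      \<and> (\<forall>i<m. \<forall>j<m. i \<noteq> j \<longrightarrow> bf eps (w i) (w j) = 0)
      \<and> (\<forall>i<m. bf eps (w i) (w i) = 1 \<or> bf eps (w i) (w i) = -1)
      \<and> (\<forall>i<k. \<forall>j<k. bf eps (us i) (us j) = 0)
      \<and> (\<forall>i<k. \<forall>j<m. bf eps (us i) (w j) = 0)
      \<and> (\<forall>i<k. \<forall>j<k. bf eps (u i) (us j) = (if i = j then 1 else 0)))"

end

theory Submission
  imports Defs
begin

(* Write \<gamma> = (I + A, v) and A = Apart \<gamma>.  The argument has three parts.
   (1) Open orbit \<Rightarrow> isotropic image: the displacement d(z) = \<gamma> z - z satisfies
       d(h z) = (I + A_h) d(z) for every h in the centralizer, so its quadratic form is
       constant on the open orbit; along a short segment x0 + t y this quadratic form is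
       a polynomial  2 t <d x0, A y> + t^2 <A y, A y>  vanishing for small t, whence
       <A y, A y> = 0.  Polarisation and the isometry property of I + A then make A
       skew-adjoint with totally isotropic image.
   (2) Group structure: skewness of the composite A_{\<gamma>\<gamma>'} = A A' + A + A' forces
       A A' = - A' A, hence A1 A2 A3 = 0; consequently A kills U0 and maps U0^\<perp>
       into U0.
   (3) Linear algebra in a Witt frame: expanding vectors in the dual coordinates of a
       Witt basis, any skew-adjoint A with isotropic image that kills U and maps W into
       U has the asserted block form. *)

section \<open>The bilinear form\<close>

lemma bf_add_left: "bf e (x + y) z = bf e x z + bf e y z"
  by (simp add: bf_def algebra_simps sum.distrib)

lemma bf_scaleR_left: "bf e (c *\<^sub>R x) z = c * bf e x z"
  by (simp add: bf_def sum_distrib_left algebra_simps)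

lemma bf_commute: "bf e x y = bf e y x"
  by (simp add: bf_def ac_simps)

lemma bf_add_right: "bf e z (x + y) = bf e z x + bf e z y"
  by (simp add: bf_commute[of e z] bf_add_left)

lemma bf_scaleR_right: "bf e z (c *\<^sub>R x) = c * bf e z x"
  by (simp add: bf_commute[of e z] bf_scaleR_left)

lemma bf_zero_left [simp]: "bf e 0 z = 0"
  and bf_zero_right [simp]: "bf e z 0 = 0"
  by (simp_all add: bf_def)

lemma linear_bf_left: "linear (\<lambda>x. bf e x z)"
  by (rule linearI) (simp_all add: bf_add_left bf_scaleR_left)

lemma linear_bf_right: "linear (\<lambda>x. bf e z x)"
  by (rule linearI) (simp_all add: bf_add_right bf_scaleR_right)

lemma bf_sum_left: "bf e (sum f S) z = (\<Sum>i\<in>S. bf e (f i) z)"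
  using linear_sum[OF linear_bf_left] by simp

lemma bf_sum_right: "bf e z (sum f S) = (\<Sum>i\<in>S. bf e z (f i))"
  using linear_sum[OF linear_bf_right] by simp

lemma bf_diff_left: "bf e (x - y) z = bf e x z - bf e y z"
  using linear_diff[OF linear_bf_left] by blast

lemma bf_line:
  "bf e (a + t *\<^sub>R b) (a + t *\<^sub>R b) = bf e a a + 2 * t * bf e a b + t^2 * bf e b b"
  by (simp add: bf_add_left bf_add_right bf_scaleR_left bf_scaleR_right bf_commute[of e b a]
      power2_eq_square algebra_simps)

text \<open>A form of signature type is nondegenerate: pair with the coordinate axes.\<close>
lemma bf_nondegenerate:
  assumes "sig e" and "\<And>y. bf e x y = 0"
  shows "x = 0"
proof -
  have "x $ i = 0" for i
  proof -
    have "bf e x (axis i 1) = e i * x $ i"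
      unfolding bf_def axis_def by (simp add: if_distrib cong: if_cong)
    moreover have "e i \<noteq> 0"
      using assms(1) unfolding sig_def by (metis zero_neq_neg_one zero_neq_one)
    ultimately show ?thesis using assms(2)[of "axis i 1"] by simp
  qed
  then show ?thesis by (simp add: vec_eq_iff)
qed

lemma bf_orth_span:
  assumes "\<forall>b\<in>S. bf e x b = 0" and "y \<in> span S"
  shows "bf e x y = 0"
  using linear_eq_0_on_span[OF linear_bf_right[of e x]] assms by blast

section \<open>Linear parts of affine isometries\<close>

lemma Iso_Apart:
  assumes "f \<in> Iso e"
  shows "linear (Apart f)"
    and "f x = Apart f x + x + f 0"
    and "bf e (x + Apart f x) (y + Apart f y) = bf e x y"
proof -
  obtain L v where L: "linear L" "\<And>x y. bf e (L x) (L y) = bf e x y" "f = (\<lambda>x. L x + v)"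
    using assms unfolding Iso_def by blast
  have A: "Apart f x = L x - x" for x
    unfolding Apart_def L(3) using linear_0[OF L(1)] by simp
  show "linear (Apart f)"
    unfolding A[abs_def] by (intro linear_compose_sub L(1) linear_ident)
  show "f x = Apart f x + x + f 0"
    using A linear_0[OF L(1)] L(3) by simp
  show "bf e (x + Apart f x) (y + Apart f y) = bf e x y"
    using L(2) A by simp
qed

lemma Iso_diff:
  assumes "f \<in> Iso e"
  shows "f a - f b = (a - b) + Apart f (a - b)"
  using Iso_Apart(2)[OF assms, of a] Iso_Apart(2)[OF assms, of b]
    linear_diff[OF Iso_Apart(1)[OF assms]]
  by (simp add: algebra_simps)

lemma id_in_Iso: "id \<in> Iso e"
  unfolding Iso_def by (auto intro!: exI[of _ id] exI[of _ 0] simp: linear_id)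

lemma Apart_comp:
  assumes "\<gamma> \<in> Iso e" and "\<gamma>' \<in> Iso e"
  shows "Apart (\<gamma> \<circ> \<gamma>') y = Apart \<gamma> (Apart \<gamma>' y) + Apart \<gamma> y + Apart \<gamma>' y"
proof -
  have "\<gamma>' y - \<gamma>' 0 = Apart \<gamma>' y + y"
    using Iso_Apart(2)[OF assms(2), of y] by (simp add: algebra_simps)
  then have "Apart (\<gamma> \<circ> \<gamma>') y = (Apart \<gamma>' y + y) + Apart \<gamma> (Apart \<gamma>' y + y) - y"
    unfolding Apart_def comp_apply Iso_diff[OF assms(1), of "\<gamma>' y" "\<gamma>' 0"] by simp
  then show ?thesis using linear_add[OF Iso_Apart(1)[OF assms(1)]] by simp
qed

lemma displacement_line:
  assumes "\<gamma> \<in> Iso e"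
  shows "\<gamma> (x + t *\<^sub>R y) - (x + t *\<^sub>R y) = (\<gamma> x - x) + t *\<^sub>R Apart \<gamma> y"
  using Iso_Apart(2)[OF assms, of "x + t *\<^sub>R y"] Iso_Apart(2)[OF assms, of x]
    linear_add[OF Iso_Apart(1)[OF assms]] linear_scale[OF Iso_Apart(1)[OF assms]]
  by (simp add: algebra_simps)

text \<open>An isometry h commuting with \<gamma> transports the displacement of \<gamma> isometrically, so
  the quadratic form of the displacement is constant along orbits of the centralizer.\<close>
lemma displacement_centralizer_invariant:
  assumes "h \<in> Iso e" and "h \<circ> \<gamma> = \<gamma> \<circ> h"
  shows "bf e (\<gamma> (h x) - h x) (\<gamma> (h x) - h x) = bf e (\<gamma> x - x) (\<gamma> x - x)"
proof -
  have "\<gamma> (h x) - h x = h (\<gamma> x) - h x"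
    using assms(2) by (metis comp_apply)
  also have "\<dots> = (\<gamma> x - x) + Apart h (\<gamma> x - x)"
    by (rule Iso_diff[OF assms(1)])
  finally show ?thesis
    using Iso_Apart(3)[OF assms(1), of "\<gamma> x - x" "\<gamma> x - x"] by simp
qed

lemma quadratic_vanishing_near_zero:
  fixes a b r :: real
  assumes "r > 0" and "\<And>t. \<bar>t\<bar> < r \<Longrightarrow> 2 * t * a + t^2 * b = 0"
  shows "b = 0"
proof -
  have "2 * (r/4) * a + (r/4)^2 * b = 0" and "2 * (r/2) * a + (r/2)^2 * b = 0"
    using assms(1) by (intro assms(2); simp)+
  then have "r * r * b + 8 * (r * a) = 0" and "r * r * b + 4 * (r * a) = 0"
    by (simp_all add: power2_eq_square field_simps)
  then have "r * r * b = 0" by linarith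
  then show ?thesis using assms(1) by simp
qed

section \<open>Witt frames\<close>

lemma sum_lessThan_delta:
  fixes f :: "nat \<Rightarrow> 'a::comm_monoid_add"
  assumes "p < k" and "\<And>i. i < k \<Longrightarrow> f i = (if i = p then c else 0)"
  shows "(\<Sum>i<k. f i) = c"
proof -
  have "(\<Sum>i<k. f i) = (\<Sum>i<k. if i = p then c else 0)"
    using assms(2) by (intro sum.cong) auto
  then show ?thesis using assms(1) by (simp add: sum.delta)
qed

locale witt_frame =
  fixes eps :: "'n::finite \<Rightarrow> real" and U :: "(real^'n) set" and k m :: nat
    and u w us :: "nat \<Rightarrow> real^'n"
  assumes sig: "sig eps"
    and spanning: "span (u ` {..<k} \<union> w ` {..<m} \<union> us ` {..<k}) = UNIV"
    and u_in_U: "i < k \<Longrightarrow> u i \<in> U"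
    and U_isotropic: "x \<in> U \<Longrightarrow> y \<in> U \<Longrightarrow> bf eps x y = 0"
    and w_orth_U: "j < m \<Longrightarrow> x \<in> U \<Longrightarrow> bf eps (w j) x = 0"
    and w_orthogonal: "i < m \<Longrightarrow> j < m \<Longrightarrow> i \<noteq> j \<Longrightarrow> bf eps (w i) (w j) = 0"
    and w_unit: "j < m \<Longrightarrow> bf eps (w j) (w j) = 1 \<or> bf eps (w j) (w j) = -1"
    and us_isotropic: "i < k \<Longrightarrow> j < k \<Longrightarrow> bf eps (us i) (us j) = 0"
    and us_orth_w: "i < k \<Longrightarrow> j < m \<Longrightarrow> bf eps (us i) (w j) = 0"
    and u_us_dual: "i < k \<Longrightarrow> j < k \<Longrightarrow> bf eps (u i) (us j) = (if i = j then 1 else 0)"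
begin

definition wsig :: "nat \<Rightarrow> real" where
  "wsig l = bf eps (w l) (w l)"

lemma wsig_square: "l < m \<Longrightarrow> wsig l * wsig l = 1"
  using w_unit unfolding wsig_def by force

lemma w_gram: "l < m \<Longrightarrow> j < m \<Longrightarrow> bf eps (w l) (w j) = (if l = j then wsig j else 0)"
  using w_orthogonal unfolding wsig_def by auto

lemma frame_nondegenerate:
  assumes "\<And>i. i < k \<Longrightarrow> bf eps y (u i) = 0" and "\<And>l. l < m \<Longrightarrow> bf eps y (w l) = 0"
    and "\<And>i. i < k \<Longrightarrow> bf eps y (us i) = 0"
  shows "y = 0"
proof (rule bf_nondegenerate[OF sig])
  fix z
  have "\<forall>b\<in>u ` {..<k} \<union> w ` {..<m} \<union> us ` {..<k}. bf eps y b = 0" using assms by auto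
  then show "bf eps y z = 0" by (rule bf_orth_span) (simp add: spanning)
qed

text \<open>Coordinates with respect to the frame are read off by pairing with the dual basis
  u* \<leftrightarrow> u, \<tilde>I w \<leftrightarrow> w.\<close>
definition expansion :: "real^'n \<Rightarrow> real^'n" where
  "expansion x = (\<Sum>i<k. bf eps x (us i) *\<^sub>R u i) + (\<Sum>l<m. (wsig l * bf eps x (w l)) *\<^sub>R w l)
      + (\<Sum>i<k. bf eps x (u i) *\<^sub>R us i)"

lemma bf_expansion:
  "bf eps (expansion x) z = (\<Sum>i<k. bf eps x (us i) * bf eps (u i) z)
     + (\<Sum>l<m. wsig l * bf eps x (w l) * bf eps (w l) z) + (\<Sum>i<k. bf eps x (u i) * bf eps (us i) z)"
  unfolding expansion_def by (simp add: bf_add_left bf_sum_left bf_scaleR_left)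

lemma bf_expansion_u: "p < k \<Longrightarrow> bf eps (expansion x) (u p) = bf eps x (u p)"
  unfolding bf_expansion
  by (simp add: U_isotropic u_in_U w_orth_U bf_commute[of eps "us _"] u_us_dual
      sum_lessThan_delta[of p])

lemma bf_expansion_w: "p < m \<Longrightarrow> bf eps (expansion x) (w p) = bf eps x (w p)"
  unfolding bf_expansion
  by (auto simp: bf_commute[of eps "u _"] w_orth_U u_in_U us_orth_w w_gram wsig_square
      mult.commute mult.left_commute intro!: sum_lessThan_delta[of p])

lemma bf_expansion_us: "p < k \<Longrightarrow> bf eps (expansion x) (us p) = bf eps x (us p)"
  unfolding bf_expansion
  by (simp add: u_us_dual bf_commute[of eps "w _"] us_orth_w us_isotropic sum_lessThan_delta[of p])

lemma frame_expansion: "x = expansion x"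
proof -
  have "x - expansion x = 0"
    by (rule frame_nondegenerate)
      (simp_all add: bf_diff_left bf_expansion_u bf_expansion_w bf_expansion_us)
  then show ?thesis by simp
qed

text \<open>Block form of a skew-adjoint map A with totally isotropic image that kills U and maps
  W into U: A w_j = -\<Sum>_i (B^T \<tilde>I)_{ij} u_i and A u*_j = \<Sum>_i C_{ij} u_i + \<Sum>_l B_{lj} w_l,
  with C skew-symmetric and B^T \<tilde>I B = 0.  The entries are B_{lj} = \<tilde>I_{ll} \<langle>A u*_j, w_l\<rangle>
  and C_{ij} = \<langle>A u*_j, u*_i\<rangle>.\<close>
lemma block_form:
  assumes skew: "\<And>x y. bf eps (A x) y = - bf eps x (A y)"
    and image_isotropic: "\<And>x y. bf eps (A x) (A y) = 0"
    and kills_u: "\<And>i. i < k \<Longrightarrow> A (u i) = 0"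
    and w_to_U: "\<And>j. j < m \<Longrightarrow> A (w j) \<in> U"
  shows "\<exists>B C.
       (\<forall>j<m. A (w j) = (\<Sum>i<k. (- (\<Sum>l<m. B l i * bf eps (w l) (w j))) *\<^sub>R u i))
     \<and> (\<forall>j<k. A (us j) = (\<Sum>i<k. C i j *\<^sub>R u i) + (\<Sum>l<m. B l j *\<^sub>R w l))
     \<and> (\<forall>i<k. \<forall>j<k. C i j = - C j i)
     \<and> (\<forall>i<k. \<forall>j<k. (\<Sum>l<m. \<Sum>l'<m. B l i * bf eps (w l) (w l') * B l' j) = 0)"
proof (intro exI conjI allI impI)
  define B where "B l j = wsig l * bf eps (A (us j)) (w l)" for l j
  define C where "C i j = bf eps (A (us j)) (us i)" for i j
  have image_orth_u: "bf eps (A x) (u i) = 0" if "i < k" for x i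
    using skew[of x "u i"] kills_u[OF that] by simp
  show A_us: "A (us j) = (\<Sum>i<k. C i j *\<^sub>R u i) + (\<Sum>l<m. B l j *\<^sub>R w l)" for j
    using frame_expansion[of "A (us j)"]
    unfolding expansion_def B_def C_def by (simp add: image_orth_u)
  show "A (w j) = (\<Sum>i<k. (- (\<Sum>l<m. B l i * bf eps (w l) (w j))) *\<^sub>R u i)" if j: "j < m" for j
  proof -
    have "bf eps (A (w j)) (us i) = - (\<Sum>l<m. B l i * bf eps (w l) (w j))" for i
    proof -
      have "(\<Sum>l<m. B l i * bf eps (w l) (w j)) = bf eps (A (us i)) (w j)"
        by (rule sum_lessThan_delta[OF j])
          (auto simp: B_def w_gram j wsig_square mult.commute mult.left_commute)
      then show ?thesis using skew[of "w j" "us i"] bf_commute[of eps "w j"] by simp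
    qed
    moreover have "bf eps (A (w j)) (w l) = 0" if "l < m" for l
      using w_orth_U[OF that w_to_U[OF j]] by (simp add: bf_commute)
    ultimately show ?thesis
      using frame_expansion[of "A (w j)"] unfolding expansion_def by (simp add: image_orth_u)
  qed
  show "C i j = - C j i" for i j
    unfolding C_def using skew[of "us j" "us i"] bf_commute[of eps "us j"] by simp
  show "(\<Sum>l<m. \<Sum>l'<m. B l i * bf eps (w l) (w l') * B l' j) = 0" if "i < k" "j < k" for i j
  proof -
    have "(\<Sum>l<m. \<Sum>l'<m. B l i * bf eps (w l) (w l') * B l' j) = (\<Sum>l<m. B l i * wsig l * B l j)"
      by (intro sum.cong refl sum_lessThan_delta) (auto simp: w_gram)
    also have "\<dots> = (\<Sum>l<m. B l j * bf eps (A (us i)) (w l))"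
      by (intro sum.cong refl) (auto simp: B_def wsig_square algebra_simps)
    also have "\<dots> = bf eps (A (us i)) (A (us j))"
      unfolding A_us[of j]
      by (simp add: bf_add_right bf_sum_right bf_scaleR_right image_orth_u)
    also have "\<dots> = 0" by (rule image_isotropic)
    finally show ?thesis .
  qed
qed

end

text \<open>A Witt basis (witt_basis) satisfies the frame relations; isotropy of U follows from
  U \<subseteq> U^\<perp> = U \<oplus> W.\<close>
lemma witt_basis_frame:
  fixes eps :: "'n::finite \<Rightarrow> real"
  assumes "sig eps" and "witt_basis eps U u w us"
  shows "witt_frame eps U (dim U) (CARD('n) - 2 * dim U) u w us"
proof -
  define k where "k = dim U"
  define m where "m = CARD('n) - 2 * k"
  define W where "W = span (w ` {..<m})"
  have span_L: "span (u ` {..<k} \<union> w ` {..<m} \<union> us ` {..<k}) = UNIV"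
    and span_u: "span (u ` {..<k}) = U"
    and orth_U: "orth eps U = {a + b |a b. a \<in> U \<and> b \<in> W}"
    and rest: "\<forall>i<m. \<forall>j<m. i \<noteq> j \<longrightarrow> bf eps (w i) (w j) = 0"
      "\<forall>i<m. bf eps (w i) (w i) = 1 \<or> bf eps (w i) (w i) = -1"
      "\<forall>i<k. \<forall>j<k. bf eps (us i) (us j) = 0"
      "\<forall>i<k. \<forall>j<m. bf eps (us i) (w j) = 0"
      "\<forall>i<k. \<forall>j<k. bf eps (u i) (us j) = (if i = j then 1 else 0)"
    using assms(2) unfolding witt_basis_def Let_def k_def[symmetric] m_def[symmetric]
      W_def[symmetric] by (simp_all add: atLeast0LessThan Un_assoc)
  have U_orth: "U \<subseteq> orth eps U" and W_orth: "W \<subseteq> orth eps U"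
    unfolding orth_U using span_zero[of "w ` {..<m}"] span_zero[of "u ` {..<k}"]
    unfolding W_def[symmetric] span_u by force+
  show ?thesis
    unfolding k_def[symmetric] m_def[symmetric]
  proof
    show "u i \<in> U" if "i < k" for i
      using that span_u by (metis lessThan_iff image_eqI span_base)
    show "bf eps (w j) x = 0" if "j < m" "x \<in> U" for j x
    proof -
      have "w j \<in> W" unfolding W_def using that(1) by (intro span_base) auto
      then show ?thesis using W_orth that(2) unfolding orth_def by blast
    qed
    show "bf eps x y = 0" if "x \<in> U" "y \<in> U" for x y
      using U_orth that unfolding orth_def by blast
  qed (use assms(1) span_L rest in auto)
qed

section \<open>Consequences for the group \<Gamma>\<close>

context
  fixes eps :: "'n::finite \<Rightarrow> real" and G :: "(real^'n \<Rightarrow> real^'n) set"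
  assumes sig: "sig eps"
    and subgroup: "is_subgroup eps G"
    and open_orbit: "has_open_orbit (centralizer eps G)"
begin

lemma G_Iso: "g \<in> G \<Longrightarrow> g \<in> Iso eps"
  using subgroup unfolding is_subgroup_def by blast

lemma G_comp: "g \<in> G \<Longrightarrow> h \<in> G \<Longrightarrow> g \<circ> h \<in> G"
  using subgroup unfolding is_subgroup_def by blast

lemma linear_Apart: "\<gamma> \<in> G \<Longrightarrow> linear (Apart \<gamma>)"
  using Iso_Apart(1)[OF G_Iso] .

lemma Apart_isotropic:
  assumes g: "\<gamma> \<in> G"
  shows "bf eps (Apart \<gamma> y) (Apart \<gamma> y) = 0"
proof -
  let ?Z = "centralizer eps G"
  obtain x0 where op: "open ((\<lambda>h. h x0) ` ?Z)"
    using open_orbit unfolding has_open_orbit_def by blast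
  have "id \<in> ?Z" unfolding centralizer_def using id_in_Iso by auto
  then have "x0 \<in> (\<lambda>h. h x0) ` ?Z" by (metis id_apply image_eqI)
  then obtain r where r: "r > 0" "ball x0 r \<subseteq> (\<lambda>h. h x0) ` ?Z"
    using op openE by blast
  define a where "a = \<gamma> x0 - x0"
  define b where "b = Apart \<gamma> y"
  have "2 * t * bf eps a b + t^2 * bf eps b b = 0" if t: "\<bar>t\<bar> < r / (norm y + 1)" for t
  proof -
    have "\<bar>t\<bar> * norm y \<le> \<bar>t\<bar> * (norm y + 1)" by (simp add: mult_left_mono)
    also have "\<dots> < r" using t by (simp add: less_divide_eq add_nonneg_pos)
    finally have "x0 + t *\<^sub>R y \<in> (\<lambda>h. h x0) ` ?Z"
      using r(2) by (auto simp: dist_norm)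
    then obtain h where h: "h \<in> ?Z" "x0 + t *\<^sub>R y = h x0" by blast
    have "h \<in> Iso eps" "h \<circ> \<gamma> = \<gamma> \<circ> h" using h(1) g unfolding centralizer_def by auto
    from displacement_centralizer_invariant[OF this, of x0]
    have "bf eps (a + t *\<^sub>R b) (a + t *\<^sub>R b) = bf eps a a"
      unfolding h(2)[symmetric] displacement_line[OF G_Iso[OF g]] a_def b_def .
    then show ?thesis unfolding bf_line by simp
  qed
  moreover have "0 < r / (norm y + 1)" using r(1) by (simp add: add_nonneg_pos)
  ultimately show ?thesis
    using quadratic_vanishing_near_zero unfolding b_def by blast
qed

text \<open>Polarisation: the image of A is totally isotropic.\<close>
lemma Apart_image_isotropic:
  assumes g: "\<gamma> \<in> G"
  shows "bf eps (Apart \<gamma> x) (Apart \<gamma> y) = 0"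
proof -
  have "bf eps (Apart \<gamma> x + Apart \<gamma> y) (Apart \<gamma> x + Apart \<gamma> y) = 0"
    using Apart_isotropic[OF g, of "x + y"] linear_add[OF linear_Apart[OF g]] by simp
  then show ?thesis
    using Apart_isotropic[OF g, of x] Apart_isotropic[OF g, of y]
    by (simp add: bf_add_left bf_add_right bf_commute[of eps "Apart \<gamma> y" "Apart \<gamma> x"])
qed

text \<open>Expanding \<langle>x + A x, y + A y\<rangle> = \<langle>x, y\<rangle> and using \<langle>A x, A y\<rangle> = 0: A is skew-adjoint.\<close>
lemma Apart_skew:
  assumes g: "\<gamma> \<in> G"
  shows "bf eps (Apart \<gamma> x) y = - bf eps x (Apart \<gamma> y)"
  using Iso_Apart(3)[OF G_Iso[OF g], of x y] Apart_image_isotropic[OF g, of x y]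
  by (simp add: bf_add_left bf_add_right)

text \<open>Skewness of A_{\<gamma>\<gamma>'} = A A' + A + A' forces the linear parts to anticommute.\<close>
lemma Apart_anticommute:
  assumes g: "\<gamma> \<in> G" and h: "\<gamma>' \<in> G"
  shows "Apart \<gamma>' (Apart \<gamma> y) = - Apart \<gamma> (Apart \<gamma>' y)"
proof -
  have comp: "Apart (\<gamma> \<circ> \<gamma>') x = Apart \<gamma> (Apart \<gamma>' x) + Apart \<gamma> x + Apart \<gamma>' x" for x
    using Apart_comp[OF G_Iso[OF g] G_Iso[OF h]] .
  have "bf eps (Apart \<gamma>' (Apart \<gamma> y) + Apart \<gamma> (Apart \<gamma>' y)) z = 0" for z
  proof -
    have "bf eps (Apart \<gamma> (Apart \<gamma>' y)) z = - bf eps y (Apart \<gamma> (Apart \<gamma>' z))"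
      using Apart_skew[OF G_comp[OF g h], of y z] Apart_skew[OF g, of y z]
        Apart_skew[OF h, of y z]
      unfolding comp by (simp add: bf_add_left bf_add_right)
    also have "\<dots> = bf eps (Apart \<gamma> y) (Apart \<gamma>' z)"
      using Apart_skew[OF g, of y "Apart \<gamma>' z"] by simp
    also have "\<dots> = - bf eps (Apart \<gamma>' (Apart \<gamma> y)) z"
      using Apart_skew[OF h, of "Apart \<gamma> y" z] by simp
    finally show ?thesis by (simp add: bf_add_left)
  qed
  then have "Apart \<gamma>' (Apart \<gamma> y) + Apart \<gamma> (Apart \<gamma>' y) = 0"
    using bf_nondegenerate[OF sig] by blast
  then show ?thesis by (simp add: eq_neg_iff_add_eq_0)
qed

lemma Apart_triple_zero:
  assumes g1: "g1 \<in> G" and g2: "g2 \<in> G" and g3: "g3 \<in> G"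
  shows "Apart g1 (Apart g2 (Apart g3 y)) = 0"
proof -
  let ?A1 = "Apart g1" and ?A2 = "Apart g2" and ?A3 = "Apart g3"
  have comp: "Apart (g2 \<circ> g3) x = ?A2 (?A3 x) + ?A2 x + ?A3 x" for x
    using Apart_comp[OF G_Iso[OF g2] G_Iso[OF g3]] .
  text \<open>Moving A1 to the right through A2 A3 directly, or one factor at a time,
    gives opposite signs.\<close>
  have "?A2 (?A3 (?A1 y)) + ?A2 (?A1 y) + ?A3 (?A1 y)
      = - (?A1 (?A2 (?A3 y)) + ?A1 (?A2 y) + ?A1 (?A3 y))"
    using Apart_anticommute[OF g1 G_comp[OF g2 g3], of y]
    unfolding comp linear_add[OF linear_Apart[OF g1]] .
  then have "?A2 (?A3 (?A1 y)) = - (?A1 (?A2 (?A3 y)) + ?A1 (?A2 y) + ?A1 (?A3 y))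
      - ?A2 (?A1 y) - ?A3 (?A1 y)"
    by (simp add: algebra_simps)
  also have "\<dots> = - ?A1 (?A2 (?A3 y))"
    using Apart_anticommute[OF g1 g2, of y] Apart_anticommute[OF g1 g3, of y] by simp
  finally have "?A2 (?A3 (?A1 y)) = - ?A1 (?A2 (?A3 y))" .
  moreover have "?A2 (?A3 (?A1 y)) = - ?A2 (?A1 (?A3 y))"
    using Apart_anticommute[OF g1 g3, of y] linear_neg[OF linear_Apart[OF g2]] by simp
  moreover have "\<dots> = ?A1 (?A2 (?A3 y))"
    using Apart_anticommute[OF g2 g1, of "?A3 y"] by simp
  ultimately show ?thesis by (simp add: vec_eq_iff)
qed

lemma Apart_in_U_Gamma: "\<gamma> \<in> G \<Longrightarrow> Apart \<gamma> y \<in> U_Gamma G"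
  unfolding U_Gamma_def by (rule span_base) blast

lemma orth_U_Gamma_iff: "x \<in> orth eps (U_Gamma G) \<longleftrightarrow> (\<forall>\<gamma>\<in>G. \<forall>y. bf eps x (Apart \<gamma> y) = 0)"
  using bf_orth_span[of "\<Union>f\<in>G. range (Apart f)" eps x] Apart_in_U_Gamma
  unfolding orth_def U_Gamma_def by blast

text \<open>A kills U0: for x \<in> U0 we have \<langle>A x, z\<rangle> = -\<langle>x, A z\<rangle> = 0 since x \<perp> U_\<Gamma>,
  and the form is nondegenerate.\<close>
lemma Apart_U0_zero:
  assumes x: "x \<in> U0 eps G" and g: "\<gamma> \<in> G"
  shows "Apart \<gamma> x = 0"
proof (rule bf_nondegenerate[OF sig])
  fix z
  have "x \<in> orth eps (U_Gamma G)" using x unfolding U0_def by blast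
  then have "bf eps x (Apart \<gamma> z) = 0" using g unfolding orth_U_Gamma_iff by blast
  then show "bf eps (Apart \<gamma> x) z = 0" using Apart_skew[OF g] by simp
qed

text \<open>Products A A' z lie in U0: they lie in U_\<Gamma>, and
  \<langle>A A' z, A'' y\<rangle> = \<langle>z, A' A A'' y\<rangle> = 0 by skewness and the triple identity.\<close>
lemma Apart_product_U0:
  assumes g: "\<gamma> \<in> G" and h: "\<gamma>' \<in> G"
  shows "Apart \<gamma> (Apart \<gamma>' z) \<in> U0 eps G"
proof -
  have "bf eps (Apart \<gamma> (Apart \<gamma>' z)) (Apart \<gamma>'' y) = 0" if g'': "\<gamma>'' \<in> G" for \<gamma>'' y
    using Apart_skew[OF g, of "Apart \<gamma>' z" "Apart \<gamma>'' y"] Apart_skew[OF h, of z]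
      Apart_triple_zero[OF h g g''] by simp
  then show ?thesis
    unfolding U0_def by (intro IntI Apart_in_U_Gamma[OF g]) (simp add: orth_U_Gamma_iff)
qed

text \<open>A maps U0^\<perp> into U0: A x lies in U_\<Gamma> and \<langle>A x, A' z\<rangle> = -\<langle>x, A A' z\<rangle> = 0.\<close>
lemma Apart_orth_U0:
  assumes x: "x \<in> orth eps (U0 eps G)" and g: "\<gamma> \<in> G"
  shows "Apart \<gamma> x \<in> U0 eps G"
proof -
  have "bf eps (Apart \<gamma> x) (Apart \<gamma>' z) = 0" if "\<gamma>' \<in> G" for \<gamma>' z
    using Apart_skew[OF g, of x] x Apart_product_U0[OF g that, of z] unfolding orth_def by simp
  then show ?thesis
    unfolding U0_def by (intro IntI Apart_in_U_Gamma[OF g]) (simp add: orth_U_Gamma_iff)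
qed

lemma Apart_block_form:
  assumes g: "\<gamma> \<in> G" and frame: "witt_frame eps (U0 eps G) k m u w us"
  shows "\<exists>B C. (\<forall>i<k. Apart \<gamma> (u i) = 0)
     \<and> (\<forall>j<m. Apart \<gamma> (w j) = (\<Sum>i<k. (- (\<Sum>l<m. B l i * bf eps (w l) (w j))) *\<^sub>R u i))
     \<and> (\<forall>j<k. Apart \<gamma> (us j) = (\<Sum>i<k. C i j *\<^sub>R u i) + (\<Sum>l<m. B l j *\<^sub>R w l))
     \<and> (\<forall>i<k. \<forall>j<k. C i j = - C j i)
     \<and> (\<forall>i<k. \<forall>j<k. (\<Sum>l<m. \<Sum>l'<m. B l i * bf eps (w l) (w l') * B l' j) = 0)"
proof -
  interpret witt_frame eps "U0 eps G" k m u w us by (rule frame)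
  have kills_u: "Apart \<gamma> (u i) = 0" if "i < k" for i
    using Apart_U0_zero[OF u_in_U[OF that] g] .
  have w_to_U: "Apart \<gamma> (w j) \<in> U0 eps G" if "j < m" for j
    using Apart_orth_U0[OF _ g] w_orth_U[OF that] by (simp add: orth_def bf_commute)
  show ?thesis
    using block_form[OF Apart_skew[OF g] Apart_image_isotropic[OF g]
        kills_u w_to_U] kills_u
    by blast
qed

end

theorem theorem4p4:
  fixes eps :: "'n::finite \<Rightarrow> real"
    and \<Gamma> :: "(real^'n \<Rightarrow> real^'n) set"
    and u w us :: "nat \<Rightarrow> real^'n"
  assumes "sig eps"
    and "is_subgroup eps \<Gamma>"
    and "has_open_orbit (centralizer eps \<Gamma>)"
    and "witt_basis eps (U0 eps \<Gamma>) u w us"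
  shows "\<forall>\<gamma>\<in>\<Gamma>. \<exists>(B :: nat \<Rightarrow> nat \<Rightarrow> real) (C :: nat \<Rightarrow> nat \<Rightarrow> real).
     let k = dim (U0 eps \<Gamma>); m = CARD('n) - 2 * k; It = (\<lambda>l l'. bf eps (w l) (w l')) in
       (\<forall>i<k. Apart \<gamma> (u i) = 0)
     \<and> (\<forall>j<m. Apart \<gamma> (w j) = (\<Sum>i<k. (- (\<Sum>l<m. B l i * It l j)) *\<^sub>R u i))
     \<and> (\<forall>j<k. Apart \<gamma> (us j) = (\<Sum>i<k. C i j *\<^sub>R u i) + (\<Sum>l<m. B l j *\<^sub>R w l))
     \<and> (\<forall>i<k. \<forall>j<k. C i j = - C j i)
     \<and> (\<forall>i<k. \<forall>j<k. (\<Sum>l<m. \<Sum>l'<m. B l i * It l l' * B l' j) = 0)"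
  using Apart_block_form[OF assms(1-3) _ witt_basis_frame[OF assms(1,4)]]
  unfolding Let_def by blast

end
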